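(* Let $m\ge1$ and let $q$ be an indeterminate. Over $\mathbb{Q}(q)$, with $m\times m$ matrices indexed by $[0,m-1]$, let $V_q=(q^{ij})_{i,j}$, $G_q=\bigl(\begin{bmatrix}i\\ j\end{bmatrix}\bigr)_{i,j}$ and $D_q$ the diagonal matrix with $i$th entry $[i]!\,(q-1)^i\,q^{\binom{i}{2}}$. Then \[ V_q\,(G_q^{-1})^{\mathrm T}=G_q\,D_q . \]
   Context: For integers $i\ge0$, $j\in\mathbb{Z}$: $[i]=(q^i-1)/(q-1)$, $[i]!=\prod_{k=1}^i[k]$, and $\begin{bmatrix}i\\ j\end{bmatrix}=[i]!/([j]![i-j]!)$ if $j\in[0,i]$, $0$ otherwise. $G_q$ is invertible (lower unitriangular); $^{\mathrm T}$ denotes transpose. *)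

theory Defs
  imports "HOL-Computational_Algebra.Polynomial" "HOL-Computational_Algebra.Fraction_Field"
    "Jordan_Normal_Form.Matrix"
begin

definition qvar :: "rat poly fract" where
  "qvar = Fract [:0, 1:] 1"

definition qint :: "'a::field \<Rightarrow> nat \<Rightarrow> 'a" where
  "qint q i = (q ^ i - 1) / (q - 1)"

definition qfact :: "'a::field \<Rightarrow> nat \<Rightarrow> 'a" where
  "qfact q i = (\<Prod>k\<in>{1..i}. qint q k)"

definition qbinom :: "'a::field \<Rightarrow> nat \<Rightarrow> int \<Rightarrow> 'a" where
  "qbinom q i j = (if 0 \<le> j \<and> j \<le> int i
     then qfact q i / (qfact q (nat j) * qfact q (i - nat j)) else 0)"

definition Vq :: "nat \<Rightarrow> rat poly fract mat" where
  "Vq m = mat m m (\<lambda>(i, j). qvar ^ (i * j))"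

definition Gq :: "nat \<Rightarrow> rat poly fract mat" where
  "Gq m = mat m m (\<lambda>(i, j). qbinom qvar i (int j))"

definition Dq :: "nat \<Rightarrow> rat poly fract mat" where
  "Dq m = mat m m (\<lambda>(i, j). if i = j
      then qfact qvar i * (qvar - 1) ^ i * qvar ^ (i choose 2) else 0)"

end

theory Submission
  imports Defs "Jordan_Normal_Form.Determinant"
begin

text \<open>
  The identity is equivalent to the factorisation
  \<open>V\<^sub>q = G\<^sub>q D\<^sub>q G\<^sub>q\<^sup>T\<close>. Entrywise this is the q-Newton expansion
  \<open>x\<^sup>j = (\<Sum>k\<le>j. [j k] * (\<Prod>l<k. x - q\<^sup>l))\<close>
  evaluated at \<open>x = q\<^sup>i\<close>, because
  \<open>(\<Prod>l<k. q\<^sup>i - q\<^sup>l) =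
    q\<^bsup>k choose 2\<^esup> (q - 1)\<^sup>k [k]! [i k]\<close>.
  The expansion is proved for the Gaussian binomials given by the q-Pascal recursion, which
  involves no division; they agree with the quotients of q-factorials in the statement because
  the indeterminate q is not a root of unity.
\<close>

lemma qfact_0 [simp]: "qfact q 0 = 1"
  by (simp add: qfact_def)

lemma qfact_Suc: "qfact q (Suc n) = qfact q n * qint q (Suc n)"
  by (simp add: qfact_def prod.nat_ivl_Suc' mult.commute)

lemma qint_add:
  fixes q :: "'a::field"
  assumes "q \<noteq> 1"
  shows "qint q (a + b) = qint q a + q ^ a * qint q b"
proof -
  have "qint q a + q ^ a * qint q b = ((q ^ a - 1) + q ^ a * (q ^ b - 1)) / (q - 1)"
    by (simp add: qint_def add_divide_distrib)
  also have "\<dots> = qint q (a + b)"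
    by (simp add: qint_def power_add algebra_simps)
  finally show ?thesis ..
qed

lemma qint_nonzero:
  fixes q :: "'a::field"
  assumes "\<And>n. 0 < n \<Longrightarrow> q ^ n \<noteq> 1" and "0 < k"
  shows "qint q k \<noteq> 0"
  using assms(1)[of 1] assms(1)[OF \<open>0 < k\<close>] by (simp add: qint_def)

lemma qfact_nonzero:
  fixes q :: "'a::field"
  assumes "\<And>n. 0 < n \<Longrightarrow> q ^ n \<noteq> 1"
  shows "qfact q k \<noteq> 0"
  using qint_nonzero[OF assms] by (simp add: qfact_def)

lemma qfact_split:
  assumes "k \<le> i"
  shows "qfact q i = (\<Prod>l<k. qint q (i - l)) * qfact q (i - k)"
  using assms
proof (induction k)
  case 0
  then show ?case by simp
next
  case (Suc k)
  then have "qfact q (i - k) = qfact q (i - Suc k) * qint q (i - k)"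
    by (metis Suc_diff_Suc Suc_le_lessD qfact_Suc)
  with Suc show ?case by (simp add: algebra_simps)
qed

lemma qpower_diff:
  fixes q :: "'a::field"
  assumes "q \<noteq> 1" and "l \<le> i"
  shows "q ^ i - q ^ l = q ^ l * (q - 1) * qint q (i - l)"
proof -
  obtain d where "i = l + d"
    using \<open>l \<le> i\<close> le_Suc_ex by blast
  have "q ^ l * (q - 1) * qint q (i - l) = q ^ l * ((q - 1) * qint q d)"
    using \<open>i = l + d\<close> by (simp add: mult.assoc)
  also have "\<dots> = q ^ l * (q ^ d - 1)"
    using assms by (simp add: qint_def)
  finally show ?thesis
    using \<open>i = l + d\<close> by (simp add: power_add right_diff_distrib)
qed

lemma sum_lessThan_eq_choose_2: "(\<Sum>l<k. l) = k choose 2"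
  by (induction k) (simp_all add: numeral_2_eq_2)

lemma prod_qpower_diff:
  fixes q :: "'a::field"
  assumes "q \<noteq> 1" and "k \<le> i"
  shows "(\<Prod>l<k. q ^ i - q ^ l)
    = q ^ (k choose 2) * (q - 1) ^ k * (\<Prod>l<k. qint q (i - l))"
proof -
  have "(\<Prod>l<k. q ^ i - q ^ l) = (\<Prod>l<k. q ^ l * (q - 1) * qint q (i - l))"
    using assms by (intro prod.cong) (simp_all add: qpower_diff)
  also have "\<dots> = q ^ (\<Sum>l<k. l) * (q - 1) ^ k * (\<Prod>l<k. qint q (i - l))"
    by (simp add: prod.distrib power_sum)
  finally show ?thesis
    by (simp add: sum_lessThan_eq_choose_2)
qed

fun gauss_binom :: "'a::comm_ring_1 \<Rightarrow> nat \<Rightarrow> nat \<Rightarrow> 'a" where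
  "gauss_binom q 0 k = (if k = 0 then 1 else 0)"
| "gauss_binom q (Suc n) k =
     (if k = 0 then 1 else gauss_binom q n (k - 1) + q ^ k * gauss_binom q n k)"

lemma gauss_binom_0_right [simp]: "gauss_binom q n 0 = 1"
  by (cases n) simp_all

lemma gauss_binom_eq_0: "n < k \<Longrightarrow> gauss_binom q n k = 0"
  by (induction n arbitrary: k) auto

lemma gauss_binom_qfact:
  fixes q :: "'a::field"
  assumes "q \<noteq> 1" and "k \<le> n"
  shows "gauss_binom q n k * qfact q k * qfact q (n - k) = qfact q n"
  using assms(2)
proof (induction n arbitrary: k)
  case 0
  then show ?case by simp
next
  case (Suc n)
  show ?case
  proof (cases k)
    case 0
    then show ?thesis by simp
  next
    case (Suc j)
    have left: "gauss_binom q n j * qfact q (Suc j) * qfact q (n - j)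
        = qfact q n * qint q (Suc j)"
      using Suc.IH[of j] Suc.prems \<open>k = Suc j\<close> by (simp add: qfact_Suc algebra_simps)
    have right: "gauss_binom q n (Suc j) * qfact q (Suc j) * qfact q (n - j)
        = qfact q n * qint q (n - j)"
    proof (cases "Suc j \<le> n")
      case True
      then have "qfact q (n - j) = qfact q (n - Suc j) * qint q (n - j)"
        by (metis Suc_diff_Suc Suc_le_lessD qfact_Suc)
      with Suc.IH[OF True] show ?thesis
        by (simp add: algebra_simps)
    next
      case False
      then show ?thesis
        by (simp add: gauss_binom_eq_0 qint_def)
    qed
    have "gauss_binom q (Suc n) k * qfact q k * qfact q (Suc n - k)
        = qfact q n * (qint q (Suc j) + q ^ Suc j * qint q (n - j))"
      using left right \<open>k = Suc j\<close> by (simp add: algebra_simps)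
    also have "\<dots> = qfact q n * qint q (Suc n)"
      using qint_add[OF assms(1), of "Suc j" "n - j"] Suc.prems \<open>k = Suc j\<close> by simp
    finally show ?thesis
      by (simp add: qfact_Suc)
  qed
qed

lemma power_eq_sum_gauss_binom:
  fixes x q :: "'a::comm_ring_1"
  shows "x ^ n = (\<Sum>k\<le>n. gauss_binom q n k * (\<Prod>l<k. x - q ^ l))"
proof (induction n)
  case 0
  then show ?case by simp
next
  case (Suc n)
  define P where "P k = (\<Prod>l<k. x - q ^ l)" for k
  have x_P: "x * P k = P (Suc k) + q ^ k * P k" for k
    by (simp add: P_def algebra_simps)
  have P_0: "P 0 = 1"
    by (simp add: P_def)
  have shift: "(\<Sum>k\<le>Suc n. q ^ k * gauss_binom q n k * P k)
      = 1 + (\<Sum>k\<le>n. q ^ Suc k * gauss_binom q n (Suc k) * P (Suc k))"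
    by (subst sum.atMost_Suc_shift) (simp add: P_0)
  have "x ^ Suc n = (\<Sum>k\<le>n. gauss_binom q n k * (x * P k))"
    using Suc.IH by (simp add: P_def sum_distrib_left mult_ac)
  also have "\<dots> = (\<Sum>k\<le>n. gauss_binom q n k * P (Suc k))
      + (\<Sum>k\<le>Suc n. q ^ k * gauss_binom q n k * P k)"
    by (simp add: x_P algebra_simps sum.distrib gauss_binom_eq_0)
  also have "\<dots> = (\<Sum>k\<le>Suc n. gauss_binom q (Suc n) k * P k)"
    unfolding shift by (subst sum.atMost_Suc_shift) (simp add: P_0 sum.distrib algebra_simps)
  finally show ?case
    by (simp add: P_def)
qed

lemma qbinom_eq_gauss_binom:
  fixes q :: "'a::field"
  assumes "\<And>n. 0 < n \<Longrightarrow> q ^ n \<noteq> 1"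
  shows "qbinom q n (int k) = gauss_binom q n k"
proof (cases "k \<le> n")
  case True
  have "q \<noteq> 1"
    using assms[of 1] by simp
  with True qfact_nonzero[OF assms, of k] qfact_nonzero[OF assms, of "n - k"] show ?thesis
    using gauss_binom_qfact[of q k n] by (simp add: qbinom_def field_simps)
next
  case False
  then show ?thesis
    by (simp add: qbinom_def gauss_binom_eq_0)
qed

lemma prod_qpower_diff_eq_qbinom:
  fixes q :: "'a::field"
  assumes "\<And>n. 0 < n \<Longrightarrow> q ^ n \<noteq> 1"
  shows "(\<Prod>l<k. q ^ i - q ^ l)
    = q ^ (k choose 2) * (q - 1) ^ k * qfact q k * qbinom q i (int k)"
proof (cases "k \<le> i")
  case True
  have "q \<noteq> 1"
    using assms[of 1] by simp
  have "qfact q k * qbinom q i (int k) = (\<Prod>l<k. qint q (i - l))"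
    using True qfact_split[OF True, of q]
      qfact_nonzero[OF assms, of k] qfact_nonzero[OF assms, of "i - k"]
    by (simp add: qbinom_def field_simps)
  with prod_qpower_diff[OF \<open>q \<noteq> 1\<close> True] show ?thesis
    by (simp add: mult.assoc)
next
  case False
  then have "(\<Prod>l<k. q ^ i - q ^ l) = 0"
    by (intro prod_zero bexI[of _ i]) auto
  with False show ?thesis
    by (simp add: qbinom_def)
qed

lemma qpower_mult_eq_sum_qbinom:
  fixes q :: "'a::field"
  assumes "\<And>n. 0 < n \<Longrightarrow> q ^ n \<noteq> 1"
  shows "q ^ (i * j) = (\<Sum>k\<le>j.
    qbinom q i (int k) * (qfact q k * (q - 1) ^ k * q ^ (k choose 2)) * qbinom q j (int k))"
proof -
  have "q ^ (i * j) = (\<Sum>k\<le>j. gauss_binom q j k * (\<Prod>l<k. q ^ i - q ^ l))"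
    unfolding power_mult by (rule power_eq_sum_gauss_binom)
  also have "\<dots> = (\<Sum>k\<le>j.
      qbinom q i (int k) * (qfact q k * (q - 1) ^ k * q ^ (k choose 2)) * qbinom q j (int k))"
    by (simp add: prod_qpower_diff_eq_qbinom qbinom_eq_gauss_binom assms mult_ac)
  finally show ?thesis .
qed

lemma qvar_power: "qvar ^ k = Fract ([:0, 1:] ^ k) 1"
  by (induction k) (simp_all add: qvar_def One_fract_def)

lemma qvar_power_ne_1:
  assumes "0 < k"
  shows "qvar ^ k \<noteq> 1"
proof
  assume "qvar ^ k = 1"
  then have "([:0, 1:] :: rat poly) ^ k = 1"
    by (simp add: qvar_power One_fract_def eq_fract)
  then have "degree (([:0, 1:] :: rat poly) ^ k) = 0"
    by simp
  with assms show False
    by (simp add: degree_power_eq)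
qed

lemma Dq_eq_mat_diag:
  "Dq m = mat_diag m (\<lambda>k. qfact qvar k * (qvar - 1) ^ k * qvar ^ (k choose 2))"
  by (rule eq_matI) (simp_all add: Dq_def mat_diag_def)

lemma Vq_eq_Gq_Dq_transpose_Gq: "Vq m = Gq m * Dq m * transpose_mat (Gq m)"
proof (rule eq_matI)
  fix i j
  let ?d = "\<lambda>k. qfact qvar k * (qvar - 1) ^ k * qvar ^ (k choose 2)"
  assume "i < dim_row (Gq m * Dq m * transpose_mat (Gq m))"
    and "j < dim_col (Gq m * Dq m * transpose_mat (Gq m))"
  then have "i < m" "j < m"
    by (simp_all add: Gq_def)
  have "(Gq m * Dq m * transpose_mat (Gq m)) $$ (i, j)
      = (\<Sum>k<m. qbinom qvar i (int k) * ?d k * qbinom qvar j (int k))"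
    using \<open>i < m\<close> \<open>j < m\<close> by (simp add: Dq_eq_mat_diag mat_diag_mult_right[of _ m]
      Gq_def scalar_prod_def lessThan_atLeast0)
  also have "\<dots> = (\<Sum>k\<le>j. qbinom qvar i (int k) * ?d k * qbinom qvar j (int k))"
    using \<open>j < m\<close> by (intro sum.mono_neutral_right) (auto simp: qbinom_def)
  also have "\<dots> = Vq m $$ (i, j)"
    using \<open>i < m\<close> \<open>j < m\<close> qvar_power_ne_1
    by (simp add: Vq_def flip: qpower_mult_eq_sum_qbinom)
  finally show "Vq m $$ (i, j) = (Gq m * Dq m * transpose_mat (Gq m)) $$ (i, j)" ..
qed (simp_all add: Vq_def Gq_def)

lemma mult_transpose_mat_right_inverse_cancel:
  fixes A :: "'a::field mat"
  assumes A: "A \<in> carrier_mat n n" and B: "B \<in> carrier_mat n n"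
    and A': "A' \<in> carrier_mat n n"
    and "A * A' = 1\<^sub>m n"
  shows "A * B * transpose_mat A * transpose_mat A' = A * B"
proof -
  have "transpose_mat A * transpose_mat A' = transpose_mat (A' * A)"
    using A A' by (simp add: transpose_mult)
  also have "A' * A = 1\<^sub>m n"
    using mat_mult_left_right_inverse[OF A A' \<open>A * A' = 1\<^sub>m n\<close>] .
  finally have "transpose_mat A * transpose_mat A' = 1\<^sub>m n"
    by simp
  moreover have "A * B * transpose_mat A * transpose_mat A'
      = A * B * (transpose_mat A * transpose_mat A')"
    using A B A' by (intro assoc_mult_mat) auto
  ultimately show ?thesis
    using A B by (simp add: right_mult_one_mat[of _ n n])
qed

theorem lemma3p5:
  fixes m :: nat and Ginv :: "rat poly fract mat"
  assumes "m \<ge> 1"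
    and "Ginv \<in> carrier_mat m m"
    and "Gq m * Ginv = 1\<^sub>m m"
  shows "Vq m * transpose_mat Ginv = Gq m * Dq m"
proof -
  have "Gq m \<in> carrier_mat m m" and "Dq m \<in> carrier_mat m m"
    by (simp_all add: Gq_def Dq_def)
  from mult_transpose_mat_right_inverse_cancel[OF this assms(2,3)] show ?thesis
    unfolding Vq_eq_Gq_Dq_transpose_Gq .
qed

end
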